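(* Let $\varphi:[r_+,\infty)\to\mathbb{C}$ be a $C^1$ function. Then for any $r'>r_+$, $$\int_{r_+}^{r'}|\varphi|^2\,dr\leq C\Big(\int_{r_+}^{r'}\mu^2r^2|\partial_r\varphi|^2\,dr+(r'-r_+)|\varphi(r')|^2\Big),$$ and if moreover $\lim_{r\to\infty}r|\varphi(r)|^2=0$, then $$\int_{r_+}^{\infty}|\varphi|^2\,dr\leq C\int_{r_+}^{\infty}\mu^2r^2|\partial_r\varphi|^2\,dr,$$ where $C$ is a constant depending only on $M$ and $a$.
   Context: $M>0$, $|a|<M$, $\Delta=r^2-2Mr+a^2$, $r_+=M+\sqrt{M^2-a^2}$, $\mu=\Delta/(r^2+a^2)$. *)

theory Defs
  imports "HOL-Analysis.Analysis"
begin

definition Kerr_Delta :: "real \<Rightarrow> real \<Rightarrow> real \<Rightarrow> real" where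
  "Kerr_Delta M a r = r^2 - 2*M*r + a^2"

definition Kerr_rplus :: "real \<Rightarrow> real \<Rightarrow> real" where
  "Kerr_rplus M a = M + sqrt (M^2 - a^2)"

definition Kerr_mu :: "real \<Rightarrow> real \<Rightarrow> real \<Rightarrow> real" where
  "Kerr_mu M a r = Kerr_Delta M a r / (r^2 + a^2)"

end

theory Submission
  imports Defs
begin

(* Differentiating (r - r+) |phi|^2 and integrating over [r+, X] gives
     int |phi|^2 = (X - r+) |phi X|^2 - int 2 (r - r+) Re (phi cnj phi'),
   and absorbing the cross term by AM-GM yields the Hardy inequality
     int |phi|^2 <= 2 (X - r+) |phi X|^2 + 4 int (r - r+)^2 |phi'|^2.
   Since Delta = (r - r+) (r - r-) with r+ - r- = 2 sqrt (M^2 - a^2) > 0, the weight mu r vanishes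
   only to first order at the horizon: mu r >= sqrt (M^2 - a^2) / r+ * (r - r+) for r >= r+, so
   (r - r+)^2 is bounded by a constant times mu^2 r^2.  On the half-line the boundary term tends
   to 0 by the decay assumption, and monotone convergence carries the bound to the limit. *)

lemma has_integral_norm_sq_by_parts:
  fixes \<phi> \<phi>' :: "real \<Rightarrow> complex"
  assumes "R \<le> X"
    and der: "\<And>r. r \<in> {R..X} \<Longrightarrow> (\<phi> has_vector_derivative \<phi>' r) (at r within {R..X})"
  shows "((\<lambda>r. (cmod (\<phi> r))\<^sup>2 + (r - R) * (2 * Re (\<phi> r * cnj (\<phi>' r))))
           has_integral (X - R) * (cmod (\<phi> X))\<^sup>2) {R..X}"
proof -
  define h where "h r = of_real (r - R) * (\<phi> r * cnj (\<phi> r))" for r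
  define h' where
    "h' r = \<phi> r * cnj (\<phi> r) + of_real (r - R) * (\<phi> r * cnj (\<phi>' r) + \<phi>' r * cnj (\<phi> r))" for r
  have "(h has_vector_derivative h' r) (at r within {R..X})" if "r \<in> {R..X}" for r
    unfolding h_def h'_def using der[OF that]
    by (auto intro!: derivative_eq_intros has_vector_derivative_of_real has_vector_derivative_mult
        simp: algebra_simps)
  then have "(h' has_integral h X - h R) {R..X}"
    using \<open>R \<le> X\<close> by (intro fundamental_theorem_of_calculus) auto
  from has_integral_linear[OF this bounded_linear_Re]
  show ?thesis
    by (simp add: o_def h_def h'_def complex_norm_square[symmetric] del: of_real_power)
qed

lemma hardy_interval:
  fixes \<phi> \<phi>' :: "real \<Rightarrow> complex"
  assumes "R \<le> X"
    and der: "\<And>r. r \<in> {R..X} \<Longrightarrow> (\<phi> has_vector_derivative \<phi>' r) (at r within {R..X})"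
    and cont: "continuous_on {R..X} \<phi>'"
  shows "integral {R..X} (\<lambda>r. (cmod (\<phi> r))\<^sup>2)
           \<le> 2 * ((X - R) * (cmod (\<phi> X))\<^sup>2)
             + 4 * integral {R..X} (\<lambda>r. (r - R)\<^sup>2 * (cmod (\<phi>' r))\<^sup>2)"
proof -
  define u where "u r = (cmod (\<phi> r))\<^sup>2" for r
  define v where "v r = (r - R)\<^sup>2 * (cmod (\<phi>' r))\<^sup>2" for r
  define w where "w r = (r - R) * (2 * Re (\<phi> r * cnj (\<phi>' r)))" for r
  have "continuous_on {R..X} \<phi>"
    using der by (intro continuous_on_vector_derivative) auto
  then have integrable: "u integrable_on {R..X}" "v integrable_on {R..X}" "w integrable_on {R..X}"
    unfolding u_def v_def w_def by (auto intro!: integrable_continuous_interval continuous_intros cont)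
  have parts: "integral {R..X} u + integral {R..X} w = (X - R) * (cmod (\<phi> X))\<^sup>2"
    using has_integral_norm_sq_by_parts[OF \<open>R \<le> X\<close> der] integrable
    by (simp add: u_def w_def integral_add[symmetric] integral_unique)
  have amgm: "- w r \<le> u r / 2 + 2 * v r" for r
  proof -
    define p where "p = cmod (\<phi> r)"
    define q where "q = \<bar>r - R\<bar> * cmod (\<phi>' r)"
    have "- w r \<le> \<bar>w r\<bar>"
      by simp
    also have "\<dots> = \<bar>r - R\<bar> * (2 * \<bar>Re (\<phi> r * cnj (\<phi>' r))\<bar>)"
      by (simp only: w_def abs_mult abs_numeral)
    also have "\<dots> \<le> \<bar>r - R\<bar> * (2 * cmod (\<phi> r * cnj (\<phi>' r)))"
      by (intro mult_left_mono abs_Re_le_cmod) auto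
    also have "\<dots> = 2 * p * q"
      by (simp add: p_def q_def norm_mult)
    also have "\<dots> \<le> p\<^sup>2 / 2 + 2 * q\<^sup>2"
      using zero_le_power2[of "p - 2 * q"] by (simp add: power2_eq_square algebra_simps)
    finally show ?thesis
      by (simp add: u_def v_def p_def q_def power_mult_distrib)
  qed
  have "integral {R..X} (\<lambda>r. - w r) \<le> integral {R..X} (\<lambda>r. u r / 2 + 2 * v r)"
    using integrable by (intro integral_le amgm integrable_neg integrable_add) auto
  then have "- integral {R..X} w \<le> integral {R..X} u / 2 + 2 * integral {R..X} v"
    using integrable by (simp add: integral_add integral_neg)
  with parts show ?thesis
    unfolding u_def v_def by linarith
qed

lemma hardy_interval_weighted:
  fixes \<phi> \<phi>' :: "real \<Rightarrow> complex" and w :: "real \<Rightarrow> real"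
  assumes "R \<le> X"
    and der: "\<And>r. r \<in> {R..X} \<Longrightarrow> (\<phi> has_vector_derivative \<phi>' r) (at r within {R..X})"
    and cont: "continuous_on {R..X} \<phi>'" and w_cont: "continuous_on {R..X} w"
    and weight: "\<And>r. r \<in> {R..X} \<Longrightarrow> (r - R)\<^sup>2 \<le> c * w r"
  shows "integral {R..X} (\<lambda>r. (cmod (\<phi> r))\<^sup>2)
           \<le> 2 * ((X - R) * (cmod (\<phi> X))\<^sup>2)
             + 4 * c * integral {R..X} (\<lambda>r. w r * (cmod (\<phi>' r))\<^sup>2)"
proof -
  have "integral {R..X} (\<lambda>r. (r - R)\<^sup>2 * (cmod (\<phi>' r))\<^sup>2)
          \<le> integral {R..X} (\<lambda>r. c * (w r * (cmod (\<phi>' r))\<^sup>2))"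
    using weight w_cont cont
    by (intro integral_le integrable_continuous_interval continuous_intros)
       (auto simp flip: mult.assoc intro: mult_right_mono)
  with hardy_interval[OF \<open>R \<le> X\<close> der cont] show ?thesis
    by simp
qed

lemma set_nn_integral_atLeast_eq_SUP:
  fixes f :: "real \<Rightarrow> real"
  assumes f: "continuous_on {R..} f"
  shows "(\<integral>\<^sup>+x\<in>{R..}. ennreal (f x) \<partial>lborel)
           = (SUP n. \<integral>\<^sup>+x\<in>{R..R + real n}. ennreal (f x) \<partial>lborel)"
proof -
  let ?f = "\<lambda>n x. ennreal (f x) * indicator {R..R + real n} x"
  have "(\<lambda>x. indicator {R..R + real n} x *\<^sub>R f x) \<in> borel_measurable borel" for n
    by (intro borel_measurable_continuous_on_indicator continuous_on_subset[OF f]) auto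
  then have "(\<lambda>x. ennreal (indicator {R..R + real n} x *\<^sub>R f x)) \<in> borel_measurable lborel" for n
    by measurable
  moreover have "ennreal (indicator S x *\<^sub>R f x) = ennreal (f x) * indicator S x" for S x
    by (simp split: split_indicator)
  ultimately have meas: "?f n \<in> borel_measurable lborel" for n
    by simp
  have "(SUP n. ?f n x) = ennreal (f x) * indicator {R..} x" for x
  proof (rule LIMSEQ_unique[OF LIMSEQ_SUP])
    obtain n where "x - R < real n"
      using reals_Archimedean2 by blast
    then have "\<forall>\<^sub>F m in sequentially. ?f m x = ennreal (f x) * indicator {R..} x"
      by (auto simp: frequently_def intro!: eventually_sequentiallyI[of n] split: split_indicator)
    then show "(\<lambda>n. ?f n x) \<longlonglongrightarrow> ennreal (f x) * indicator {R..} x"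
      by (rule tendsto_eventually)
  qed (auto simp: incseq_def split: split_indicator)
  then have "(\<integral>\<^sup>+x\<in>{R..}. ennreal (f x) \<partial>lborel) = (\<integral>\<^sup>+x. (SUP n. ?f n x) \<partial>lborel)"
    by simp
  also have "\<dots> = (SUP n. integral\<^sup>N lborel (?f n))"
    using meas by (intro nn_integral_monotone_convergence_SUP)
      (auto simp: incseq_def le_fun_def split: split_indicator)
  finally show ?thesis .
qed

lemma set_nn_integral_atLeastAtMost_eq_integral:
  fixes f :: "real \<Rightarrow> real"
  assumes "continuous_on {R..X} f" and "\<And>x. x \<in> {R..X} \<Longrightarrow> 0 \<le> f x"
  shows "(\<integral>\<^sup>+x\<in>{R..X}. ennreal (f x) \<partial>lborel) = ennreal (integral {R..X} f)"
  using assms by (intro nn_integral_has_integral_lebesgue' integrable_integral integrable_continuous_interval)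

lemma set_nn_integral_atLeast_le_of_interval_bounds:
  fixes f w b :: "real \<Rightarrow> real"
  assumes f: "continuous_on {R..} f" "\<And>x. R \<le> x \<Longrightarrow> 0 \<le> f x"
    and w: "continuous_on {R..} w" "\<And>x. R \<le> x \<Longrightarrow> 0 \<le> w x"
    and "0 \<le> C" and b: "(b \<longlongrightarrow> 0) at_top" "\<And>X. R < X \<Longrightarrow> 0 \<le> b X"
    and bound: "\<And>X. R < X \<Longrightarrow> integral {R..X} f \<le> b X + C * integral {R..X} w"
  shows "(\<integral>\<^sup>+x\<in>{R..}. ennreal (f x) \<partial>lborel)
           \<le> ennreal C * (\<integral>\<^sup>+x\<in>{R..}. ennreal (w x) \<partial>lborel)"
proof -
  define W where "W = (\<integral>\<^sup>+x\<in>{R..}. ennreal (w x) \<partial>lborel)"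
  have "(\<integral>\<^sup>+x\<in>{R..R + real n}. ennreal (f x) \<partial>lborel) \<le> ennreal C * W" for n
  proof (rule tendsto_lowerbound)
    show "((\<lambda>X. ennreal (b X) + ennreal C * W) \<longlongrightarrow> ennreal C * W) at_top"
      using tendsto_add[OF tendsto_ennrealI[OF b(1)] tendsto_const] by simp
    show "\<forall>\<^sub>F X in at_top. (\<integral>\<^sup>+x\<in>{R..R + real n}. ennreal (f x) \<partial>lborel) \<le> ennreal (b X) + ennreal C * W"
      using eventually_gt_at_top[of "R + real n"]
    proof eventually_elim
      case (elim X)
      then have "R < X" by simp
      have "(\<integral>\<^sup>+x\<in>{R..R + real n}. ennreal (f x) \<partial>lborel) \<le> (\<integral>\<^sup>+x\<in>{R..X}. ennreal (f x) \<partial>lborel)"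
        using elim by (intro nn_integral_mono) (auto split: split_indicator)
      also have "\<dots> = ennreal (integral {R..X} f)"
        using f by (intro set_nn_integral_atLeastAtMost_eq_integral continuous_on_subset[OF f(1)]) auto
      also have "\<dots> \<le> ennreal (b X + C * integral {R..X} w)"
        by (rule ennreal_leI[OF bound[OF \<open>R < X\<close>]])
      also have "\<dots> = ennreal (b X) + ennreal C * ennreal (integral {R..X} w)"
      proof -
        have "0 \<le> integral {R..X} w"
          using w by (intro integral_nonneg integrable_continuous_interval continuous_on_subset[OF w(1)]) auto
        with b(2)[OF \<open>R < X\<close>] \<open>0 \<le> C\<close> show ?thesis
          by (simp add: ennreal_mult)
      qed
      also have "ennreal (integral {R..X} w) = (\<integral>\<^sup>+x\<in>{R..X}. ennreal (w x) \<partial>lborel)"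
        using w by (intro set_nn_integral_atLeastAtMost_eq_integral[symmetric] continuous_on_subset[OF w(1)]) auto
      also have "\<dots> \<le> W"
        unfolding W_def by (intro nn_integral_mono) (auto split: split_indicator)
      finally show ?case
        by (simp add: add_left_mono mult_left_mono)
    qed
  qed simp
  then show ?thesis
    unfolding set_nn_integral_atLeast_eq_SUP[OF f(1)] W_def by (rule SUP_least)
qed

lemma tendsto_shifted_mult_at_top_zero:
  fixes f :: "real \<Rightarrow> real"
  assumes "((\<lambda>r. r * f r) \<longlongrightarrow> 0) at_top"
  shows "((\<lambda>r. (r - R) * f r) \<longlongrightarrow> 0) at_top"
proof -
  have "((\<lambda>r. r * f r * (1 - R / r)) \<longlongrightarrow> 0 * (1 - 0)) at_top"
    by (intro tendsto_intros assms tendsto_divide_0[OF tendsto_const]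
        filterlim_at_top_imp_at_infinity filterlim_ident)
  moreover have "\<forall>\<^sub>F r in at_top. r * f r * (1 - R / r) = (r - R) * f r"
    using eventually_gt_at_top[of 0] by eventually_elim (simp add: field_simps)
  ultimately show ?thesis
    by (simp add: tendsto_cong)
qed

lemma power2_less_of_abs_less:
  fixes a M :: "'a::linordered_idom"
  assumes "\<bar>a\<bar> < M"
  shows "a\<^sup>2 < M\<^sup>2"
  using assms abs_le_square_iff[of M a] by auto

lemma abs_less_Kerr_rplus:
  assumes "\<bar>a\<bar> < M"
  shows "\<bar>a\<bar> < Kerr_rplus M a"
proof -
  have "0 \<le> sqrt (M\<^sup>2 - a\<^sup>2)"
    using power2_less_of_abs_less[OF assms] by simp
  with assms show ?thesis
    unfolding Kerr_rplus_def by linarith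
qed

lemma Kerr_Delta_factor:
  assumes "a\<^sup>2 \<le> M\<^sup>2"
  shows "Kerr_Delta M a r = (r - Kerr_rplus M a) * (r - (M - sqrt (M\<^sup>2 - a\<^sup>2)))"
  using assms by (simp add: Kerr_Delta_def Kerr_rplus_def algebra_simps power2_eq_square)

lemma Kerr_mu_mult_ge:
  assumes "\<bar>a\<bar> < M" and r: "Kerr_rplus M a \<le> r"
  shows "sqrt (M\<^sup>2 - a\<^sup>2) / Kerr_rplus M a * (r - Kerr_rplus M a) \<le> Kerr_mu M a r * r"
proof -
  define s where "s = sqrt (M\<^sup>2 - a\<^sup>2)"
  define R where "R = Kerr_rplus M a"
  define rm where "rm = M - s"
  have "a\<^sup>2 < M\<^sup>2"
    using power2_less_of_abs_less[OF assms(1)] .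
  then have s: "0 < s" "s\<^sup>2 = M\<^sup>2 - a\<^sup>2"
    by (simp_all add: s_def)
  have "s \<le> sqrt (M\<^sup>2)"
    unfolding s_def by (intro real_sqrt_le_mono) simp
  then have "s \<le> M"
    using assms(1) by simp
  have R: "R = M + s" "\<bar>a\<bar> < R"
    using abs_less_Kerr_rplus[OF assms(1)] by (simp_all add: R_def s_def Kerr_rplus_def)
  have pos: "0 < R" "0 < r\<^sup>2 + a\<^sup>2"
    using R r by (auto simp: R_def add_pos_nonneg)
  have "a\<^sup>2 \<le> r\<^sup>2"
    using R r abs_le_square_iff[of a r] by (simp add: R_def)
  then have "s * (r\<^sup>2 + a\<^sup>2) \<le> 2 * s * r\<^sup>2"
    using s by (simp add: mult_left_mono power2_eq_square)
  also have "\<dots> \<le> R * (r - rm) * r"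
  proof -
    \<comment> \<open>the difference is \<open>rm * (r - R) * r\<close>, as \<open>R - rm = 2 * s\<close>\<close>
    have "0 \<le> rm * (r - R) * r"
      using \<open>s \<le> M\<close> r R by (simp add: rm_def R_def)
    then show ?thesis
      by (simp add: R rm_def power2_eq_square algebra_simps)
  qed
  finally have "s / R \<le> (r - rm) * r / (r\<^sup>2 + a\<^sup>2)"
    using pos by (simp add: frac_le_eq field_simps)
  then have "s / R * (r - R) \<le> (r - rm) * r / (r\<^sup>2 + a\<^sup>2) * (r - R)"
    using r by (intro mult_right_mono) (simp_all add: R_def)
  also have "\<dots> = Kerr_mu M a r * r"
    using \<open>a\<^sup>2 < M\<^sup>2\<close> by (simp add: Kerr_mu_def Kerr_Delta_factor R_def rm_def s_def)
  finally show ?thesis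
    by (simp add: s_def R_def)
qed

lemma Kerr_horizon_distance_le:
  assumes "\<bar>a\<bar> < M" and r: "Kerr_rplus M a \<le> r"
  shows "(r - Kerr_rplus M a)\<^sup>2 \<le> (Kerr_rplus M a / sqrt (M\<^sup>2 - a\<^sup>2))\<^sup>2 * ((Kerr_mu M a r)\<^sup>2 * r\<^sup>2)"
proof -
  define \<kappa> where "\<kappa> = sqrt (M\<^sup>2 - a\<^sup>2) / Kerr_rplus M a"
  have "0 < \<kappa>"
    using power2_less_of_abs_less[OF assms(1)] abs_less_Kerr_rplus[OF assms(1)] by (simp add: \<kappa>_def)
  have "\<kappa> * (r - Kerr_rplus M a) \<le> Kerr_mu M a r * r"
    unfolding \<kappa>_def by (rule Kerr_mu_mult_ge[OF assms])
  then have "(\<kappa> * (r - Kerr_rplus M a))\<^sup>2 \<le> (Kerr_mu M a r * r)\<^sup>2"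
    using \<open>0 < \<kappa>\<close> r by (intro power_mono) auto
  then have "\<kappa>\<^sup>2 * (r - Kerr_rplus M a)\<^sup>2 \<le> (Kerr_mu M a r)\<^sup>2 * r\<^sup>2"
    by (simp only: power_mult_distrib)
  then have "(r - Kerr_rplus M a)\<^sup>2 \<le> (Kerr_mu M a r)\<^sup>2 * r\<^sup>2 / \<kappa>\<^sup>2"
    using \<open>0 < \<kappa>\<close> by (simp add: pos_le_divide_eq mult.commute)
  also have "\<dots> = (Kerr_rplus M a / sqrt (M\<^sup>2 - a\<^sup>2))\<^sup>2 * ((Kerr_mu M a r)\<^sup>2 * r\<^sup>2)"
    by (simp add: \<kappa>_def power_divide)
  finally show ?thesis .
qed

lemma continuous_on_Kerr_mu:
  assumes "\<bar>a\<bar> < M"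
  shows "continuous_on {Kerr_rplus M a..} (Kerr_mu M a)"
proof -
  have "r\<^sup>2 + a\<^sup>2 \<noteq> 0" if "Kerr_rplus M a \<le> r" for r
  proof -
    have "0 < r"
      using abs_less_Kerr_rplus[OF assms] that by linarith
    then have "0 < r\<^sup>2 + a\<^sup>2"
      by (simp add: add_pos_nonneg)
    then show ?thesis
      by linarith
  qed
  then show ?thesis
    unfolding Kerr_mu_def Kerr_Delta_def by (intro continuous_intros) auto
qed

definition Kerr_hardy_const :: "real \<Rightarrow> real \<Rightarrow> real" where
  "Kerr_hardy_const M a = max 2 (4 * (Kerr_rplus M a / sqrt (M\<^sup>2 - a\<^sup>2))\<^sup>2)"

lemma Kerr_hardy_interval:
  fixes \<phi> \<phi>' :: "real \<Rightarrow> complex"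
  assumes "\<bar>a\<bar> < M"
    and der: "\<And>r. r \<in> {Kerr_rplus M a..} \<Longrightarrow>
               (\<phi> has_vector_derivative \<phi>' r) (at r within {Kerr_rplus M a..})"
    and cont: "continuous_on {Kerr_rplus M a..} \<phi>'"
    and X: "Kerr_rplus M a \<le> X"
  shows "integral {Kerr_rplus M a..X} (\<lambda>r. (cmod (\<phi> r))\<^sup>2)
           \<le> Kerr_hardy_const M a *
               (integral {Kerr_rplus M a..X} (\<lambda>r. (Kerr_mu M a r)\<^sup>2 * r\<^sup>2 * (cmod (\<phi>' r))\<^sup>2)
                + (X - Kerr_rplus M a) * (cmod (\<phi> X))\<^sup>2)"
proof -
  let ?R = "Kerr_rplus M a" and ?c = "(Kerr_rplus M a / sqrt (M\<^sup>2 - a\<^sup>2))\<^sup>2"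
  let ?I = "integral {?R..X} (\<lambda>r. (Kerr_mu M a r)\<^sup>2 * r\<^sup>2 * (cmod (\<phi>' r))\<^sup>2)"
    and ?B = "(X - ?R) * (cmod (\<phi> X))\<^sup>2"
  have weight: "continuous_on {?R..X} (\<lambda>r. (Kerr_mu M a r)\<^sup>2 * r\<^sup>2)"
    by (intro continuous_intros continuous_on_subset[OF continuous_on_Kerr_mu[OF assms(1)]]) auto
  have "integral {?R..X} (\<lambda>r. (cmod (\<phi> r))\<^sup>2) \<le> 2 * ?B + 4 * ?c * ?I"
  proof (rule hardy_interval_weighted[OF X _ _ weight])
    show "(\<phi> has_vector_derivative \<phi>' r) (at r within {?R..X})" if "r \<in> {?R..X}" for r
      using that by (intro has_vector_derivative_within_subset[OF der]) auto
  qed (use cont Kerr_horizon_distance_le[OF assms(1)] in \<open>auto elim: continuous_on_subset\<close>)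
  moreover have "0 \<le> ?I"
    using continuous_on_subset[OF cont, of "{?R..X}"]
    by (intro integral_nonneg integrable_continuous_interval continuous_on_mult[OF weight] continuous_intros) auto
  then have "4 * ?c * ?I \<le> Kerr_hardy_const M a * ?I" and "2 * ?B \<le> Kerr_hardy_const M a * ?B"
    using X by (auto simp: Kerr_hardy_const_def intro: mult_right_mono)
  ultimately show ?thesis
    unfolding distrib_left by linarith
qed

lemma Kerr_hardy_half_line:
  fixes \<phi> \<phi>' :: "real \<Rightarrow> complex"
  assumes "\<bar>a\<bar> < M"
    and der: "\<And>r. r \<in> {Kerr_rplus M a..} \<Longrightarrow>
               (\<phi> has_vector_derivative \<phi>' r) (at r within {Kerr_rplus M a..})"
    and cont: "continuous_on {Kerr_rplus M a..} \<phi>'"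
    and decay: "((\<lambda>r. r * (cmod (\<phi> r))\<^sup>2) \<longlongrightarrow> 0) at_top"
  shows "(\<integral>\<^sup>+r\<in>{Kerr_rplus M a..}. ennreal ((cmod (\<phi> r))\<^sup>2) \<partial>lborel)
           \<le> ennreal (Kerr_hardy_const M a) * (\<integral>\<^sup>+r\<in>{Kerr_rplus M a..}.
                 ennreal ((Kerr_mu M a r)\<^sup>2 * r\<^sup>2 * (cmod (\<phi>' r))\<^sup>2) \<partial>lborel)"
proof (rule set_nn_integral_atLeast_le_of_interval_bounds)
  have "continuous_on {Kerr_rplus M a..} \<phi>"
    using der by (intro continuous_on_vector_derivative) auto
  then show "continuous_on {Kerr_rplus M a..} (\<lambda>r. (cmod (\<phi> r))\<^sup>2)"
    by (intro continuous_intros)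
  show "continuous_on {Kerr_rplus M a..} (\<lambda>r. (Kerr_mu M a r)\<^sup>2 * r\<^sup>2 * (cmod (\<phi>' r))\<^sup>2)"
    using continuous_on_Kerr_mu[OF assms(1)] cont by (intro continuous_intros)
  show "((\<lambda>X. Kerr_hardy_const M a * ((X - Kerr_rplus M a) * (cmod (\<phi> X))\<^sup>2)) \<longlongrightarrow> 0) at_top"
    using tendsto_mult_right_zero[OF tendsto_shifted_mult_at_top_zero[OF decay]] .
  show "integral {Kerr_rplus M a..X} (\<lambda>r. (cmod (\<phi> r))\<^sup>2)
          \<le> Kerr_hardy_const M a * ((X - Kerr_rplus M a) * (cmod (\<phi> X))\<^sup>2)
            + Kerr_hardy_const M a * integral {Kerr_rplus M a..X}
                (\<lambda>r. (Kerr_mu M a r)\<^sup>2 * r\<^sup>2 * (cmod (\<phi>' r))\<^sup>2)" if "Kerr_rplus M a < X" for X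
    using Kerr_hardy_interval[OF assms(1-3), of X] that by (simp add: algebra_simps)
qed (auto simp: Kerr_hardy_const_def)

theorem lemma2p15:
  fixes M a :: real
  assumes "M > 0" and "\<bar>a\<bar> < M"
  shows "\<exists>C>0. \<forall>(\<phi>::real \<Rightarrow> complex) \<phi>'.
    ((\<forall>r\<in>{Kerr_rplus M a..}. (\<phi> has_vector_derivative \<phi>' r) (at r within {Kerr_rplus M a..}))
     \<and> continuous_on {Kerr_rplus M a..} \<phi>') \<longrightarrow>
    ((\<forall>r'>Kerr_rplus M a.
        integral {Kerr_rplus M a..r'} (\<lambda>r. (cmod (\<phi> r))^2)
        \<le> C * (integral {Kerr_rplus M a..r'}
                 (\<lambda>r. (Kerr_mu M a r)^2 * r^2 * (cmod (\<phi>' r))^2)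
               + (r' - Kerr_rplus M a) * (cmod (\<phi> r'))^2))
     \<and> (((\<lambda>r. r * (cmod (\<phi> r))^2) \<longlongrightarrow> 0) at_top \<longrightarrow>
        (\<integral>\<^sup>+ r\<in>{Kerr_rplus M a..}. ennreal ((cmod (\<phi> r))^2) \<partial>lborel)
        \<le> ennreal C * (\<integral>\<^sup>+ r\<in>{Kerr_rplus M a..}.
              ennreal ((Kerr_mu M a r)^2 * r^2 * (cmod (\<phi>' r))^2) \<partial>lborel)))"
proof (intro exI[of _ "Kerr_hardy_const M a"] conjI allI impI)
  show "0 < Kerr_hardy_const M a"
    by (simp add: Kerr_hardy_const_def)
  fix \<phi> \<phi>' :: "real \<Rightarrow> complex" and X :: real
  assume "(\<forall>r\<in>{Kerr_rplus M a..}. (\<phi> has_vector_derivative \<phi>' r) (at r within {Kerr_rplus M a..}))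
    \<and> continuous_on {Kerr_rplus M a..} \<phi>'"
  then have der: "\<And>r. r \<in> {Kerr_rplus M a..} \<Longrightarrow>
                   (\<phi> has_vector_derivative \<phi>' r) (at r within {Kerr_rplus M a..})"
    and cont: "continuous_on {Kerr_rplus M a..} \<phi>'"
    by auto
  show "integral {Kerr_rplus M a..X} (\<lambda>r. (cmod (\<phi> r))\<^sup>2)
          \<le> Kerr_hardy_const M a *
              (integral {Kerr_rplus M a..X} (\<lambda>r. (Kerr_mu M a r)\<^sup>2 * r\<^sup>2 * (cmod (\<phi>' r))\<^sup>2)
               + (X - Kerr_rplus M a) * (cmod (\<phi> X))\<^sup>2)" if "Kerr_rplus M a < X"
    using Kerr_hardy_interval[OF assms(2) der cont] that by simp
  show "(\<integral>\<^sup>+ r\<in>{Kerr_rplus M a..}. ennreal ((cmod (\<phi> r))\<^sup>2) \<partial>lborel)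
          \<le> ennreal (Kerr_hardy_const M a) * (\<integral>\<^sup>+ r\<in>{Kerr_rplus M a..}.
                ennreal ((Kerr_mu M a r)\<^sup>2 * r\<^sup>2 * (cmod (\<phi>' r))\<^sup>2) \<partial>lborel)"
    if "((\<lambda>r. r * (cmod (\<phi> r))\<^sup>2) \<longlongrightarrow> 0) at_top"
    using Kerr_hardy_half_line[OF assms(2) der cont that] .
qed

end
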